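(* Let $X$ be an abstract simplicial complex with a simplicial action of a finite group $G$ that restricts to an action on a subcomplex $A$ (not necessarily full). Then there is a $G$-equivariant homotopy equivalence $|X|-|A|\simeq_G|X\ominus A|$.
   Context: Simplicial difference $X\ominus A$: vertices are the simplices of $X$ not in $A$ that are minimal (under inclusion) among simplices of $X$ not in $A$; a finite nonempty set $\{\sigma_0,\dots,\sigma_d\}$ of these is a simplex iff $\sigma_0\cup\dots\cup\sigma_d$ is a simplex of $X$. $G$ acts simplicially on $X\ominus A$ through its action on simplices of $X$, and topologically on $|X|-|A|$ through the realization of the action on $X$. A $G$-homotopy equivalence is a $G$-map admitting a $G$-map inverse up to $G$-equivariant homotopies. *)

theory Defs
  imports "HOL-Analysis.Analysis" "HOL-Algebra.Group_Action"
begin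

definition abs_simplicial_complex :: "'v set set \<Rightarrow> bool" where
  "abs_simplicial_complex K \<longleftrightarrow>
     (\<forall>\<sigma>\<in>K. finite \<sigma> \<and> \<sigma> \<noteq> {}) \<and>
     (\<forall>\<sigma>\<in>K. \<forall>\<tau>. \<tau> \<subseteq> \<sigma> \<and> \<tau> \<noteq> {} \<longrightarrow> \<tau> \<in> K)"

definition subcomplex :: "'v set set \<Rightarrow> 'v set set \<Rightarrow> bool" where
  "subcomplex A K \<longleftrightarrow> abs_simplicial_complex A \<and> A \<subseteq> K"

definition cvertices :: "'v set set \<Rightarrow> 'v set" where
  "cvertices K = \<Union>K"

definition sdiff_vertices :: "'v set set \<Rightarrow> 'v set set \<Rightarrow> 'v set set" where
  "sdiff_vertices X A =
     {\<sigma> \<in> X - A. \<forall>\<tau>\<in>X - A. \<tau> \<subseteq> \<sigma> \<longrightarrow> \<tau> = \<sigma>}"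

definition simplicial_difference :: "'v set set \<Rightarrow> 'v set set \<Rightarrow> 'v set set set" where
  "simplicial_difference X A =
     {S. finite S \<and> S \<noteq> {} \<and> S \<subseteq> sdiff_vertices X A \<and> \<Union>S \<in> X}"

text \<open>Points of \<open>|K|\<close> are functions \<open>\<alpha> : V \<rightarrow> [0,1]\<close> (barycentric coordinates) whose
support is a simplex of \<open>K\<close> and whose coordinates sum to 1.\<close>

definition csupp :: "('v \<Rightarrow> real) \<Rightarrow> 'v set" where
  "csupp \<alpha> = {v. \<alpha> v \<noteq> 0}"

definition closed_simplex :: "'v set \<Rightarrow> ('v \<Rightarrow> real) set" where
  "closed_simplex \<sigma> = {\<alpha>. (\<forall>v. 0 \<le> \<alpha> v) \<and> csupp \<alpha> \<subseteq> \<sigma> \<and> sum \<alpha> \<sigma> = 1}"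

definition realization_points :: "'v set set \<Rightarrow> ('v \<Rightarrow> real) set" where
  "realization_points K = {\<alpha>. (\<forall>v. 0 \<le> \<alpha> v) \<and> csupp \<alpha> \<in> K \<and> sum \<alpha> (csupp \<alpha>) = 1}"

text \<open>Each closed simplex carries the (Euclidean) subspace topology from the product
topology on \<open>V \<rightarrow> \<real>\<close>; \<open>|K|\<close> carries the coherent (weak) topology: a set is open iff
its intersection with every closed simplex is open in that simplex.\<close>

definition realization_open :: "'v set set \<Rightarrow> ('v \<Rightarrow> real) set \<Rightarrow> bool" where
  "realization_open K U \<longleftrightarrow> U \<subseteq> realization_points K \<and>
     (\<forall>\<sigma>\<in>K. openin (subtopology (product_topology (\<lambda>_. euclideanreal) UNIV) (closed_simplex \<sigma>))
                    (U \<inter> closed_simplex \<sigma>))"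

lemma istopology_realization_open: "istopology (realization_open K)"
  unfolding istopology_def realization_open_def
proof (intro conjI allI impI)
  fix S T :: "('a \<Rightarrow> real) set"
  assume S: "S \<subseteq> realization_points K \<and> (\<forall>\<sigma>\<in>K. openin (subtopology (product_topology (\<lambda>_. euclideanreal) UNIV) (closed_simplex \<sigma>)) (S \<inter> closed_simplex \<sigma>))"
     and T: "T \<subseteq> realization_points K \<and> (\<forall>\<sigma>\<in>K. openin (subtopology (product_topology (\<lambda>_. euclideanreal) UNIV) (closed_simplex \<sigma>)) (T \<inter> closed_simplex \<sigma>))"
  show "S \<inter> T \<subseteq> realization_points K" using S by blast
  show "\<forall>\<sigma>\<in>K. openin (subtopology (product_topology (\<lambda>_. euclideanreal) UNIV) (closed_simplex \<sigma>)) (S \<inter> T \<inter> closed_simplex \<sigma>)"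
  proof
    fix \<sigma> assume "\<sigma> \<in> K"
    then have "openin (subtopology (product_topology (\<lambda>_. euclideanreal) UNIV) (closed_simplex \<sigma>)) ((S \<inter> closed_simplex \<sigma>) \<inter> (T \<inter> closed_simplex \<sigma>))"
      using S T \<open>\<sigma> \<in> K\<close> by (metis openin_Int)
    then show "openin (subtopology (product_topology (\<lambda>_. euclideanreal) UNIV) (closed_simplex \<sigma>)) (S \<inter> T \<inter> closed_simplex \<sigma>)"
      by (simp add: Int_ac)
  qed
next
  fix \<K> :: "('a \<Rightarrow> real) set set"
  assume H: "\<forall>x\<in>\<K>. x \<subseteq> realization_points K \<and> (\<forall>\<sigma>\<in>K. openin (subtopology (product_topology (\<lambda>_. euclideanreal) UNIV) (closed_simplex \<sigma>)) (x \<inter> closed_simplex \<sigma>))"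
  show "\<Union>\<K> \<subseteq> realization_points K" using H by blast
  show "\<forall>\<sigma>\<in>K. openin (subtopology (product_topology (\<lambda>_. euclideanreal) UNIV) (closed_simplex \<sigma>)) (\<Union>\<K> \<inter> closed_simplex \<sigma>)"
  proof
    fix \<sigma> assume "\<sigma> \<in> K"
    then have "openin (subtopology (product_topology (\<lambda>_. euclideanreal) UNIV) (closed_simplex \<sigma>)) (\<Union>((\<lambda>x. x \<inter> closed_simplex \<sigma>) ` \<K>))"
      using H \<open>\<sigma> \<in> K\<close> by (intro openin_Union) blast
    moreover have "\<Union>((\<lambda>x. x \<inter> closed_simplex \<sigma>) ` \<K>) = \<Union>\<K> \<inter> closed_simplex \<sigma>" by blast
    ultimately show "openin (subtopology (product_topology (\<lambda>_. euclideanreal) UNIV) (closed_simplex \<sigma>)) (\<Union>\<K> \<inter> closed_simplex \<sigma>)"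
      by simp
  qed
qed

definition realization :: "'v set set \<Rightarrow> ('v \<Rightarrow> real) topology" where
  "realization K = topology (realization_open K)"

definition realization_minus :: "'v set set \<Rightarrow> 'v set set \<Rightarrow> ('v \<Rightarrow> real) topology" where
  "realization_minus X A = subtopology (realization X) (realization_points X - realization_points A)"

definition simplicial_action :: "('g, 'b) monoid_scheme \<Rightarrow> ('g \<Rightarrow> 'v \<Rightarrow> 'v) \<Rightarrow> 'v set set \<Rightarrow> bool" where
  "simplicial_action G \<phi> K \<longleftrightarrow> group_action G (cvertices K) \<phi> \<and>
     (\<forall>g\<in>carrier G. \<forall>\<sigma>\<in>K. \<phi> g ` \<sigma> \<in> K)"

definition sdiff_action :: "('g \<Rightarrow> 'v \<Rightarrow> 'v) \<Rightarrow> 'g \<Rightarrow> 'v set \<Rightarrow> 'v set" where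
  "sdiff_action \<phi> g \<sigma> = \<phi> g ` \<sigma>"

text \<open>Realization of a vertex action: \<open>(g\<alpha>)(g v) = \<alpha>(v)\<close>.\<close>

definition realization_action ::
  "('g, 'b) monoid_scheme \<Rightarrow> ('g \<Rightarrow> 'v \<Rightarrow> 'v) \<Rightarrow> 'v set set \<Rightarrow> 'g \<Rightarrow> ('v \<Rightarrow> real) \<Rightarrow> ('v \<Rightarrow> real)" where
  "realization_action G \<phi> K g \<alpha> = (\<lambda>w. if w \<in> cvertices K then \<alpha> (\<phi> (inv\<^bsub>G\<^esub> g) w) else 0)"

definition equivariant_map ::
  "('g, 'b) monoid_scheme \<Rightarrow> 'x topology \<Rightarrow> ('g \<Rightarrow> 'x \<Rightarrow> 'x) \<Rightarrow> 'y topology \<Rightarrow> ('g \<Rightarrow> 'y \<Rightarrow> 'y)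
    \<Rightarrow> ('x \<Rightarrow> 'y) \<Rightarrow> bool" where
  "equivariant_map G S a T b f \<longleftrightarrow> continuous_map S T f \<and>
     (\<forall>g\<in>carrier G. \<forall>x\<in>topspace S. f (a g x) = b g (f x))"

definition equivariant_homotopy_equivalent ::
  "('g, 'b) monoid_scheme \<Rightarrow> 'x topology \<Rightarrow> ('g \<Rightarrow> 'x \<Rightarrow> 'x) \<Rightarrow> 'y topology \<Rightarrow> ('g \<Rightarrow> 'y \<Rightarrow> 'y) \<Rightarrow> bool" where
  "equivariant_homotopy_equivalent G S a T b \<longleftrightarrow>
     (\<exists>f h. equivariant_map G S a T b f \<and> equivariant_map G T b S a h \<and>
        homotopic_with (\<lambda>k. \<forall>g\<in>carrier G. \<forall>x\<in>topspace S. k (a g x) = a g (k x)) S S (h \<circ> f) id \<and>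
        homotopic_with (\<lambda>k. \<forall>g\<in>carrier G. \<forall>y\<in>topspace T. k (b g y) = b g (k y)) T T (f \<circ> h) id)"

end

theory Submission
  imports Defs
begin

text \<open>
  The map \<open>|X| - |A| \<rightarrow> |X \<ominus> A|\<close> gives a vertex \<open>\<tau>\<close> of \<open>X \<ominus> A\<close> the normalised weight
  \<open>\<Prod>v\<in>\<tau>. \<alpha> v\<close>. It is positive exactly when \<open>\<tau>\<close> lies in the support of \<open>\<alpha>\<close>, a simplex of
  \<open>X\<close> outside \<open>A\<close>, which contains some minimal simplex outside \<open>A\<close>; so the normalisation
  never divides by zero. The map back sends a vertex \<open>\<tau>\<close> to the barycentre of \<open>\<tau>\<close> and
  extends linearly; its image avoids \<open>|A|\<close> because \<open>A\<close> is closed under faces. Each composite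
  keeps a point inside a closed simplex containing the point itself, so the straight-line
  homotopies to the identities stay in these simplices and, again since \<open>A\<close> is closed under
  faces, away from \<open>|A|\<close>. Continuity only has to be checked on closed simplices, as the
  realizations carry the coherent topology. All constructions commute with relabelling
  vertices by a bijection preserving \<open>X\<close> and \<open>A\<close>, hence are \<open>G\<close>-equivariant.
\<close>

abbreviation coord_topology :: "('v \<Rightarrow> real) topology" where
  "coord_topology \<equiv> product_topology (\<lambda>_. euclideanreal) UNIV"

lemma continuous_map_coordinate:
  "continuous_map (subtopology coord_topology S) euclideanreal (\<lambda>\<alpha>. \<alpha> v)"
  by (rule continuous_map_from_subtopology) (rule continuous_map_product_projection, simp)

lemma abs_simplicial_complex_empty [simp]: "abs_simplicial_complex {}"
  by (simp add: abs_simplicial_complex_def)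

lemma abs_simplicial_complex_face:
  assumes "abs_simplicial_complex K" "\<sigma> \<in> K" "\<tau> \<subseteq> \<sigma>" "\<tau> \<noteq> {}"
  shows "\<tau> \<in> K"
  using assms unfolding abs_simplicial_complex_def by blast

lemma abs_simplicial_complex_simplex:
  assumes "abs_simplicial_complex K" "\<sigma> \<in> K"
  shows "finite \<sigma>" "\<sigma> \<noteq> {}"
  using assms unfolding abs_simplicial_complex_def by auto

lemma closed_simplexD:
  assumes "\<alpha> \<in> closed_simplex \<sigma>"
  shows "0 \<le> \<alpha> v" "csupp \<alpha> \<subseteq> \<sigma>" "sum \<alpha> \<sigma> = 1"
  using assms by (auto simp: closed_simplex_def)

lemma sum_csupp_closed_simplex:
  assumes "finite \<sigma>" "\<alpha> \<in> closed_simplex \<sigma>"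
  shows "sum \<alpha> (csupp \<alpha>) = 1"
proof -
  have "sum \<alpha> (csupp \<alpha>) = sum \<alpha> \<sigma>"
    using assms closed_simplexD[OF assms(2)] by (intro sum.mono_neutral_left) (auto simp: csupp_def)
  then show ?thesis using closed_simplexD(3)[OF assms(2)] by simp
qed

lemma closed_simplex_mono:
  assumes "finite \<sigma>" "\<tau> \<subseteq> \<sigma>" "\<alpha> \<in> closed_simplex \<tau>"
  shows "\<alpha> \<in> closed_simplex \<sigma>"
proof -
  have "sum \<alpha> \<sigma> = sum \<alpha> \<tau>"
    using assms closed_simplexD(2)[OF assms(3)] by (intro sum.mono_neutral_right) (auto simp: csupp_def)
  then show ?thesis using assms closed_simplexD[OF assms(3)] by (auto simp: closed_simplex_def)
qed

lemma realization_pointsI: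
  assumes "finite \<sigma>" "\<alpha> \<in> closed_simplex \<sigma>" "csupp \<alpha> \<in> K"
  shows "\<alpha> \<in> realization_points K"
  using assms closed_simplexD(1)[OF assms(2)] sum_csupp_closed_simplex[OF assms(1,2)]
  by (simp add: realization_points_def)

lemma realization_pointsD:
  assumes "\<alpha> \<in> realization_points K"
  shows "\<alpha> \<in> closed_simplex (csupp \<alpha>)" "csupp \<alpha> \<in> K"
  using assms by (auto simp: realization_points_def closed_simplex_def)

lemma closed_simplex_subset_realization_points:
  assumes K: "abs_simplicial_complex K" and \<sigma>: "\<sigma> \<in> K"
  shows "closed_simplex \<sigma> \<subseteq> realization_points K"
proof
  fix \<alpha> assume \<alpha>: "\<alpha> \<in> closed_simplex \<sigma>"
  have fin: "finite \<sigma>" using abs_simplicial_complex_simplex[OF K \<sigma>] by blast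
  have "csupp \<alpha> \<noteq> {}" using sum_csupp_closed_simplex[OF fin \<alpha>] by auto
  then have "csupp \<alpha> \<in> K"
    using abs_simplicial_complex_face[OF K \<sigma> closed_simplexD(2)[OF \<alpha>]] by blast
  then show "\<alpha> \<in> realization_points K" by (rule realization_pointsI[OF fin \<alpha>])
qed

lemma closed_simplex_Diff_realization_points_empty:
  "abs_simplicial_complex K \<Longrightarrow> \<sigma> \<in> K \<Longrightarrow> closed_simplex \<sigma> - realization_points K = {}"
  using closed_simplex_subset_realization_points by blast

lemma openin_realization: "openin (realization K) U \<longleftrightarrow> realization_open K U"
  by (simp add: realization_def istopology_realization_open)

lemma topspace_realization:
  assumes K: "abs_simplicial_complex K"
  shows "topspace (realization K) = realization_points K"
proof -
  have "realization_points K \<inter> closed_simplex \<sigma> = closed_simplex \<sigma>" if "\<sigma> \<in> K" for \<sigma>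
    using closed_simplex_subset_realization_points[OF K that] by blast
  then have "openin (realization K) (realization_points K)"
    by (simp add: openin_realization realization_open_def openin_subtopology_refl)
  moreover have "topspace (realization K) \<subseteq> realization_points K"
    by (metis openin_realization openin_topspace realization_open_def)
  ultimately show ?thesis by (meson openin_subset subset_antisym)
qed

lemma topspace_realization_minus:
  assumes "abs_simplicial_complex K"
  shows "topspace (realization_minus K B) = realization_points K - realization_points B"
  using topspace_realization[OF assms] by (auto simp: realization_minus_def)

lemma realization_points_empty [simp]: "realization_points {} = {}"
  by (simp add: realization_points_def)

lemma realization_eq_realization_minus_empty:
  assumes "abs_simplicial_complex K"
  shows "realization K = realization_minus K {}"
  by (simp add: realization_minus_def topspace_realization[OF assms, symmetric])

lemma closedin_closed_simplex:
  assumes fin: "finite \<tau>"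
  shows "closedin coord_topology (closed_simplex \<tau>)"
proof -
  have eq: "closed_simplex \<tau> =
      (\<Inter>v. {\<alpha> \<in> topspace coord_topology. \<alpha> v \<in> (if v \<in> \<tau> then {0..} else {0})})
      \<inter> {\<alpha> \<in> topspace coord_topology. sum \<alpha> \<tau> \<in> {1}}"
    by (auto simp: closed_simplex_def csupp_def split: if_splits; metis order_refl)
  have coord: "continuous_map coord_topology euclideanreal (\<lambda>\<alpha>. \<alpha> v)" for v :: 'a
    by (rule continuous_map_product_projection) simp
  have "continuous_map coord_topology euclideanreal (\<lambda>\<alpha>. sum \<alpha> \<tau>)"
    using fin by (intro continuous_map_sum coord)
  then show ?thesis
    unfolding eq
    by (intro closedin_Int closedin_INT closedin_continuous_map_preimage[OF coord]
        closedin_continuous_map_preimage) auto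
qed

lemma closedin_realization_points_Int_closed_simplex:
  assumes B: "abs_simplicial_complex B" and fin: "finite \<sigma>"
  shows "closedin (subtopology coord_topology (closed_simplex \<sigma>)) (realization_points B \<inter> closed_simplex \<sigma>)"
proof -
  let ?faces = "{\<tau>\<in>B. \<tau> \<subseteq> \<sigma>}"
  have "realization_points B \<inter> closed_simplex \<sigma> = closed_simplex \<sigma> \<inter> \<Union>(closed_simplex ` ?faces)"
  proof (intro equalityI subsetI)
    fix \<alpha> assume "\<alpha> \<in> realization_points B \<inter> closed_simplex \<sigma>"
    then show "\<alpha> \<in> closed_simplex \<sigma> \<inter> \<Union>(closed_simplex ` ?faces)"
      using realization_pointsD[of \<alpha> B] by (auto simp: closed_simplex_def)
  next
    fix \<alpha> assume "\<alpha> \<in> closed_simplex \<sigma> \<inter> \<Union>(closed_simplex ` ?faces)"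
    then show "\<alpha> \<in> realization_points B \<inter> closed_simplex \<sigma>"
      using closed_simplex_subset_realization_points[OF B] by blast
  qed
  moreover have "finite ?faces" using fin by (auto intro: finite_subset[of _ "Pow \<sigma>"])
  then have "closedin coord_topology (\<Union>(closed_simplex ` ?faces))"
    using fin by (intro closedin_Union) (auto intro: closedin_closed_simplex finite_subset)
  ultimately show ?thesis by (simp add: closedin_subtopology_Int_closed)
qed

lemma openin_closed_simplex_Diff_realization_points:
  assumes "abs_simplicial_complex B" "finite \<sigma>"
  shows "openin (subtopology coord_topology (closed_simplex \<sigma>)) (closed_simplex \<sigma> - realization_points B)"
proof -
  have "closed_simplex \<sigma> - realization_points B =
      topspace (subtopology coord_topology (closed_simplex \<sigma>)) - (realization_points B \<inter> closed_simplex \<sigma>)"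
    by auto
  then show ?thesis
    using openin_diff[OF openin_topspace closedin_realization_points_Int_closed_simplex[OF assms]] by simp
qed

lemma openin_subtopology_closed_simplex_Diff_iff:
  assumes "abs_simplicial_complex B" "finite \<sigma>"
  shows "openin (subtopology coord_topology (closed_simplex \<sigma> - realization_points B)) W \<longleftrightarrow>
         openin (subtopology coord_topology (closed_simplex \<sigma>)) W \<and> W \<subseteq> closed_simplex \<sigma> - realization_points B"
proof -
  have "subtopology coord_topology (closed_simplex \<sigma> - realization_points B) =
        subtopology (subtopology coord_topology (closed_simplex \<sigma>)) (closed_simplex \<sigma> - realization_points B)"
    by (simp add: subtopology_subtopology Int_absorb1 Diff_subset)
  then show ?thesis
    using openin_open_subtopology[OF openin_closed_simplex_Diff_realization_points[OF assms]] by simp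
qed

lemma openin_realization_points_Diff:
  assumes K: "abs_simplicial_complex K" and B: "abs_simplicial_complex B"
  shows "openin (realization K) (realization_points K - realization_points B)"
  unfolding openin_realization realization_open_def
proof (intro conjI ballI)
  fix \<sigma> assume \<sigma>: "\<sigma> \<in> K"
  have "(realization_points K - realization_points B) \<inter> closed_simplex \<sigma> = closed_simplex \<sigma> - realization_points B"
    using closed_simplex_subset_realization_points[OF K \<sigma>] by blast
  then show "openin (subtopology coord_topology (closed_simplex \<sigma>))
      ((realization_points K - realization_points B) \<inter> closed_simplex \<sigma>)"
    using openin_closed_simplex_Diff_realization_points[OF B abs_simplicial_complex_simplex(1)[OF K \<sigma>]]
    by simp
qed simp

section \<open>Continuity on the coherent topology\<close>

lemma quotient_map_realization_minus:
  assumes K: "abs_simplicial_complex K" and B: "abs_simplicial_complex B"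
  shows "quotient_map (sum_topology (\<lambda>\<sigma>. subtopology coord_topology (closed_simplex \<sigma> - realization_points B)) K)
            (realization_minus K B) snd"
    (is "quotient_map ?S _ _")
  unfolding quotient_map_def
proof (intro conjI allI impI)
  show "snd ` topspace ?S = topspace (realization_minus K B)"
  proof (intro equalityI subsetI)
    fix x assume "x \<in> snd ` topspace ?S"
    then show "x \<in> topspace (realization_minus K B)"
      using closed_simplex_subset_realization_points[OF K] by (force simp: topspace_realization_minus[OF K])
  next
    fix x assume "x \<in> topspace (realization_minus K B)"
    then have "(csupp x, x) \<in> topspace ?S"
      using topspace_realization_minus[OF K] realization_pointsD[of x K] by simp
    then show "x \<in> snd ` topspace ?S" by (metis image_eqI snd_conv)
  qed
next
  fix U assume "U \<subseteq> topspace (realization_minus K B)"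
  then have U: "U \<subseteq> realization_points K - realization_points B"
    using topspace_realization_minus[OF K] by simp
  have slice: "{y. (\<sigma>, y) \<in> {x \<in> topspace ?S. snd x \<in> U}} = U \<inter> closed_simplex \<sigma>" if "\<sigma> \<in> K" for \<sigma>
    using U that by auto
  have "openin ?S {x \<in> topspace ?S. snd x \<in> U}
    \<longleftrightarrow> (\<forall>\<sigma>\<in>K. openin (subtopology coord_topology (closed_simplex \<sigma> - realization_points B)) (U \<inter> closed_simplex \<sigma>))"
    unfolding openin_sum_topology using slice by auto
  also have "\<dots> \<longleftrightarrow> (\<forall>\<sigma>\<in>K. openin (subtopology coord_topology (closed_simplex \<sigma>)) (U \<inter> closed_simplex \<sigma>))"
    using openin_subtopology_closed_simplex_Diff_iff[OF B abs_simplicial_complex_simplex(1)[OF K]] U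
    by blast
  also have "\<dots> \<longleftrightarrow> openin (realization K) U"
    using U by (auto simp: openin_realization realization_open_def)
  also have "\<dots> \<longleftrightarrow> openin (realization_minus K B) U"
    unfolding realization_minus_def
    using openin_open_subtopology[OF openin_realization_points_Diff[OF K B]] U by blast
  finally show "openin ?S {x \<in> topspace ?S. snd x \<in> U} \<longleftrightarrow> openin (realization_minus K B) U" .
qed

lemma continuous_map_from_sum_topology:
  assumes "\<And>i. i \<in> I \<Longrightarrow> continuous_map (F i) Y g"
  shows "continuous_map (sum_topology F I) Y (g \<circ> snd)"
  unfolding continuous_map_def
proof (intro conjI allI impI)
  show "g \<circ> snd \<in> topspace (sum_topology F I) \<rightarrow> topspace Y"
    using assms by (auto simp: continuous_map_def Pi_iff)
next
  fix V assume V: "openin Y V"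
  show "openin (sum_topology F I) {x \<in> topspace (sum_topology F I). (g \<circ> snd) x \<in> V}"
    unfolding openin_sum_topology
  proof (intro conjI ballI)
    fix i assume i: "i \<in> I"
    have "{x. (i, x) \<in> {x \<in> topspace (sum_topology F I). (g \<circ> snd) x \<in> V}} = {x \<in> topspace (F i). g x \<in> V}"
      using i by auto
    then show "openin (F i) {x. (i, x) \<in> {x \<in> topspace (sum_topology F I). (g \<circ> snd) x \<in> V}}"
      using openin_continuous_map_preimage[OF assms[OF i] V] by simp
  qed auto
qed

lemma openin_sum_topology_component:
  assumes "i \<in> I" "openin (F i) U"
  shows "openin (sum_topology F I) ({i} \<times> U)"
proof -
  have "{x. (j, x) \<in> {i} \<times> U} = (if j = i then U else {})" for j
    by auto
  then show ?thesis
    unfolding openin_sum_topology using assms openin_subset[OF assms(2)] by auto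
qed

lemma continuous_map_from_prod_sum_topology:
  assumes "\<And>i. i \<in> I \<Longrightarrow> continuous_map (prod_topology Z (F i)) Y g"
  shows "continuous_map (prod_topology Z (sum_topology F I)) Y (\<lambda>(t,(i,x)). g (t,x))"
  unfolding continuous_map_def
proof (intro conjI allI impI)
  show "(\<lambda>(t,(i,x)). g (t,x)) \<in> topspace (prod_topology Z (sum_topology F I)) \<rightarrow> topspace Y"
    using assms by (fastforce simp: continuous_map_def Pi_iff)
next
  fix V assume V: "openin Y V"
  let ?S = "{x \<in> topspace (prod_topology Z (sum_topology F I)). (\<lambda>(t,(i,x)). g (t,x)) x \<in> V}"
  show "openin (prod_topology Z (sum_topology F I)) ?S"
    unfolding openin_subopen[of _ ?S]
  proof
    fix p assume "p \<in> ?S"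
    then obtain t i x where p: "p = (t,(i,x))" and i: "i \<in> I"
      and tx: "(t,x) \<in> {u \<in> topspace (prod_topology Z (F i)). g u \<in> V}"
      by auto
    have "openin (prod_topology Z (F i)) {u \<in> topspace (prod_topology Z (F i)). g u \<in> V}"
      using openin_continuous_map_preimage[OF assms[OF i] V] .
    then obtain U1 U2 where U: "openin Z U1" "openin (F i) U2" "t \<in> U1" "x \<in> U2"
      "U1 \<times> U2 \<subseteq> {u \<in> topspace (prod_topology Z (F i)). g u \<in> V}"
      using tx unfolding openin_prod_topology_alt by meson
    show "\<exists>T. openin (prod_topology Z (sum_topology F I)) T \<and> p \<in> T \<and> T \<subseteq> ?S"
    proof (intro exI conjI)
      show "openin (prod_topology Z (sum_topology F I)) (U1 \<times> ({i} \<times> U2))"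
        using U(1) openin_sum_topology_component[of i I F U2, OF i U(2)] by (simp add: openin_prod_Times_iff)
      show "p \<in> U1 \<times> ({i} \<times> U2)" using p U by simp
      show "U1 \<times> ({i} \<times> U2) \<subseteq> ?S"
        using U(5) i openin_subset[OF U(1)] by auto
    qed
  qed
qed

lemma continuous_map_from_realization_minus:
  assumes K: "abs_simplicial_complex K" and B: "abs_simplicial_complex B"
    and f: "\<And>\<sigma>. \<sigma> \<in> K \<Longrightarrow> continuous_map (subtopology coord_topology (closed_simplex \<sigma> - realization_points B)) Y f"
  shows "continuous_map (realization_minus K B) Y f"
proof -
  have "continuous_map (sum_topology (\<lambda>\<sigma>. subtopology coord_topology (closed_simplex \<sigma> - realization_points B)) K)
      Y (f \<circ> snd)"
    by (rule continuous_map_from_sum_topology) (erule f)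
  with quotient_map_realization_minus[OF K B] show ?thesis
    by (rule continuous_compose_quotient_map)
qed

lemma continuous_map_from_interval_times_realization_minus:
  assumes K: "abs_simplicial_complex K" and B: "abs_simplicial_complex B"
    and H: "\<And>\<sigma>. \<sigma> \<in> K \<Longrightarrow> continuous_map (prod_topology (top_of_set {0..1::real})
                (subtopology coord_topology (closed_simplex \<sigma> - realization_points B))) Y H"
  shows "continuous_map (prod_topology (top_of_set {0..1::real}) (realization_minus K B)) Y H"
proof -
  have "locally_compact_space (top_of_set {0..1::real})"
    by (simp add: compact_imp_locally_compact_space compact_space_subtopology compactin_euclidean_iff)
  moreover have "Hausdorff_space (top_of_set {0..1::real})"
    by (simp add: Hausdorff_space_subtopology)
  ultimately have q: "quotient_map
      (prod_topology (top_of_set {0..1::real})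
        (sum_topology (\<lambda>\<sigma>. subtopology coord_topology (closed_simplex \<sigma> - realization_points B)) K))
      (prod_topology (top_of_set {0..1::real}) (realization_minus K B)) (\<lambda>(t,y). (t, snd y))"
    using quotient_map_prod_right quotient_map_realization_minus[OF K B] by blast
  have eq: "H \<circ> (\<lambda>(t,y). (t, snd y)) = (\<lambda>(t,(i,x)). H (t,x))"
    by (auto simp: fun_eq_iff)
  show ?thesis
    by (rule continuous_compose_quotient_map[OF q]) (unfold eq, rule continuous_map_from_prod_sum_topology[OF H])
qed

lemma continuous_map_into_realization_minus:
  assumes K: "abs_simplicial_complex K" and \<sigma>: "\<sigma> \<in> K"
    and f: "continuous_map W coord_topology f"
    and im: "\<And>x. x \<in> topspace W \<Longrightarrow> f x \<in> closed_simplex \<sigma> - realization_points B"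
  shows "continuous_map W (realization_minus K B) f"
proof -
  have f\<sigma>: "continuous_map W (subtopology coord_topology (closed_simplex \<sigma>)) f"
    using f im by (auto simp: continuous_map_in_subtopology)
  have "continuous_map W (realization K) f"
    unfolding continuous_map_def
  proof (intro conjI allI impI)
    show "f \<in> topspace W \<rightarrow> topspace (realization K)"
      using im closed_simplex_subset_realization_points[OF K \<sigma>] topspace_realization[OF K] by blast
  next
    fix U assume "openin (realization K) U"
    then have "openin (subtopology coord_topology (closed_simplex \<sigma>)) (U \<inter> closed_simplex \<sigma>)"
      using \<sigma> by (auto simp: openin_realization realization_open_def)
    then have "openin W {x \<in> topspace W. f x \<in> U \<inter> closed_simplex \<sigma>}"
      by (rule openin_continuous_map_preimage[OF f\<sigma>])
    moreover have "{x \<in> topspace W. f x \<in> U \<inter> closed_simplex \<sigma>} = {x \<in> topspace W. f x \<in> U}"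
      using im by blast
    ultimately show "openin W {x \<in> topspace W. f x \<in> U}" by simp
  qed
  then show ?thesis
    unfolding realization_minus_def continuous_map_in_subtopology
    using im closed_simplex_subset_realization_points[OF K \<sigma>] by blast
qed

lemma continuous_map_from_realization:
  assumes K: "abs_simplicial_complex K"
    and f: "\<And>\<sigma>. \<sigma> \<in> K \<Longrightarrow> continuous_map (subtopology coord_topology (closed_simplex \<sigma>)) Y f"
  shows "continuous_map (realization K) Y f"
  using continuous_map_from_realization_minus[OF K abs_simplicial_complex_empty, of Y f] f
  by (simp add: realization_eq_realization_minus_empty[OF K])

lemma continuous_map_from_interval_times_realization:
  assumes K: "abs_simplicial_complex K"
    and H: "\<And>\<sigma>. \<sigma> \<in> K \<Longrightarrow> continuous_map (prod_topology (top_of_set {0..1::real})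
                (subtopology coord_topology (closed_simplex \<sigma>))) Y H"
  shows "continuous_map (prod_topology (top_of_set {0..1::real}) (realization K)) Y H"
  using continuous_map_from_interval_times_realization_minus[OF K abs_simplicial_complex_empty, of Y H] H
  by (simp add: realization_eq_realization_minus_empty[OF K])

lemma continuous_map_into_realization:
  assumes K: "abs_simplicial_complex K" and \<sigma>: "\<sigma> \<in> K"
    and f: "continuous_map W coord_topology f"
    and im: "\<And>x. x \<in> topspace W \<Longrightarrow> f x \<in> closed_simplex \<sigma>"
  shows "continuous_map W (realization K) f"
  using continuous_map_into_realization_minus[OF K \<sigma> f, of "{}"] im
  by (simp add: realization_eq_realization_minus_empty[OF K])

section \<open>The simplicial difference\<close>

lemma sdiff_verticesD:
  assumes "\<tau> \<in> sdiff_vertices X A"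
  shows "\<tau> \<in> X" "\<tau> \<notin> A"
  using assms unfolding sdiff_vertices_def by auto

lemma sdiff_vertex_simplex:
  assumes "abs_simplicial_complex X" "\<tau> \<in> sdiff_vertices X A"
  shows "finite \<tau>" "\<tau> \<noteq> {}" "\<tau> \<subseteq> cvertices X"
  using abs_simplicial_complex_simplex[OF assms(1) sdiff_verticesD(1)[OF assms(2)]]
    sdiff_verticesD(1)[OF assms(2)]
  by (auto simp: cvertices_def)

lemma sdiff_vertex_below:
  assumes X: "abs_simplicial_complex X" and S: "S \<in> X" "S \<notin> A"
  obtains \<tau> where "\<tau> \<in> sdiff_vertices X A" "\<tau> \<subseteq> S"
proof -
  let ?M = "{\<tau> \<in> X - A. \<tau> \<subseteq> S}"
  have "finite ?M"
    using abs_simplicial_complex_simplex[OF X S(1)] by (auto intro: finite_subset[of _ "Pow S"])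
  moreover have "S \<in> ?M" using S by auto
  ultimately obtain m where m: "m \<in> ?M" "\<forall>b\<in>?M. b \<le> m \<longrightarrow> m = b"
    by (meson finite_has_minimal2)
  then have "m \<in> sdiff_vertices X A"
    unfolding sdiff_vertices_def by blast
  with m show ?thesis using that by blast
qed

lemma simplicial_differenceD:
  assumes "S \<in> simplicial_difference X A"
  shows "finite S" "S \<noteq> {}" "S \<subseteq> sdiff_vertices X A" "\<Union>S \<in> X"
  using assms by (auto simp: simplicial_difference_def)

lemma abs_simplicial_complex_simplicial_difference:
  assumes X: "abs_simplicial_complex X"
  shows "abs_simplicial_complex (simplicial_difference X A)"
  unfolding abs_simplicial_complex_def
proof (intro conjI ballI allI impI)
  fix S T assume S: "S \<in> simplicial_difference X A" and T: "T \<subseteq> S \<and> T \<noteq> {}"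
  note S' = simplicial_differenceD[OF S]
  show "T \<in> simplicial_difference X A"
  proof -
    obtain t where t: "t \<in> T" using T by blast
    then have "t \<in> sdiff_vertices X A" using T S'(3) by blast
    then have "\<Union>T \<noteq> {}" using t sdiff_vertex_simplex(2)[OF X] by blast
    moreover have "\<Union>T \<subseteq> \<Union>S" using T by blast
    ultimately have "\<Union>T \<in> X" using abs_simplicial_complex_face[OF X S'(4)] by blast
    then show ?thesis
      using T S' finite_subset[of T S] by (auto simp: simplicial_difference_def)
  qed
qed (simp_all add: simplicial_difference_def)

lemma cvertices_simplicial_difference:
  "cvertices (simplicial_difference X A) = sdiff_vertices X A"
proof (intro equalityI subsetI)
  fix \<tau> assume "\<tau> \<in> cvertices (simplicial_difference X A)"
  then show "\<tau> \<in> sdiff_vertices X A"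
    by (auto simp: cvertices_def simplicial_difference_def)
next
  fix \<tau> assume "\<tau> \<in> sdiff_vertices X A"
  then have "{\<tau>} \<in> simplicial_difference X A"
    using sdiff_verticesD(1) by (simp add: simplicial_difference_def)
  then show "\<tau> \<in> cvertices (simplicial_difference X A)"
    by (auto simp: cvertices_def)
qed

lemma Union_simplicial_difference_notin:
  assumes X: "abs_simplicial_complex X" and A: "abs_simplicial_complex A"
    and S: "S \<in> simplicial_difference X A"
  shows "\<Union>S \<notin> A"
proof
  assume "\<Union>S \<in> A"
  obtain \<tau> where \<tau>: "\<tau> \<in> S" using simplicial_differenceD(2)[OF S] by blast
  then have "\<tau> \<in> sdiff_vertices X A" using simplicial_differenceD(3)[OF S] by blast
  then have "\<tau> \<notin> A" "\<tau> \<noteq> {}" by (rule sdiff_verticesD(2), rule sdiff_vertex_simplex(2)[OF X])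
  moreover have "\<tau> \<subseteq> \<Union>S" using \<tau> by blast
  ultimately show False using abs_simplicial_complex_face[OF A \<open>\<Union>S \<in> A\<close>] by blast
qed

definition sdiff_faces :: "'v set set \<Rightarrow> 'v set set \<Rightarrow> 'v set \<Rightarrow> 'v set set" where
  "sdiff_faces X A \<sigma> = {\<tau> \<in> sdiff_vertices X A. \<tau> \<subseteq> \<sigma>}"

lemma finite_sdiff_faces: "finite \<sigma> \<Longrightarrow> finite (sdiff_faces X A \<sigma>)"
  by (rule finite_subset[of _ "Pow \<sigma>"]) (auto simp: sdiff_faces_def)

lemma sdiff_faces_mono: "\<tau> \<subseteq> \<sigma> \<Longrightarrow> sdiff_faces X A \<tau> \<subseteq> sdiff_faces X A \<sigma>"
  by (auto simp: sdiff_faces_def)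

lemma Union_sdiff_faces_subset: "\<Union>(sdiff_faces X A \<sigma>) \<subseteq> \<sigma>"
  by (auto simp: sdiff_faces_def)

lemma sdiff_faces_in_simplicial_difference:
  assumes X: "abs_simplicial_complex X" and \<sigma>: "\<sigma> \<in> X" "\<sigma> \<notin> A"
  shows "sdiff_faces X A \<sigma> \<in> simplicial_difference X A"
proof -
  obtain \<tau> where \<tau>: "\<tau> \<in> sdiff_vertices X A" "\<tau> \<subseteq> \<sigma>"
    using sdiff_vertex_below[OF X \<sigma>] by blast
  then have face: "\<tau> \<in> sdiff_faces X A \<sigma>" by (simp add: sdiff_faces_def)
  then have "\<Union>(sdiff_faces X A \<sigma>) \<noteq> {}" using sdiff_vertex_simplex(2)[OF X \<tau>(1)] by blast
  then have "\<Union>(sdiff_faces X A \<sigma>) \<in> X"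
    by (rule abs_simplicial_complex_face[OF X \<sigma>(1) Union_sdiff_faces_subset])
  with face show ?thesis
    using finite_sdiff_faces[OF abs_simplicial_complex_simplex(1)[OF X \<sigma>(1)]]
    by (auto simp: simplicial_difference_def sdiff_faces_def)
qed

lemma subset_sdiff_faces_Union:
  "S \<in> simplicial_difference X A \<Longrightarrow> S \<subseteq> sdiff_faces X A (\<Union>S)"
  by (auto simp: simplicial_difference_def sdiff_faces_def)

section \<open>The map from \<open>|X| - |A|\<close> to \<open>|X \<ominus> A|\<close>\<close>

definition sdiff_coords :: "'v set set \<Rightarrow> 'v set set \<Rightarrow> ('v \<Rightarrow> real) \<Rightarrow> 'v set \<Rightarrow> real" where
  "sdiff_coords X A \<alpha> = (\<lambda>\<tau>. if \<tau> \<in> sdiff_faces X A (csupp \<alpha>)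
      then prod \<alpha> \<tau> / (\<Sum>\<tau>'\<in>sdiff_faces X A (csupp \<alpha>). prod \<alpha> \<tau>') else 0)"

lemma sdiff_coords_eq:
  assumes X: "abs_simplicial_complex X" and \<sigma>: "\<sigma> \<in> X" and \<alpha>: "\<alpha> \<in> closed_simplex \<sigma>"
  shows "sdiff_coords X A \<alpha> \<tau> =
    (if \<tau> \<in> sdiff_faces X A \<sigma> then prod \<alpha> \<tau> / (\<Sum>\<tau>'\<in>sdiff_faces X A \<sigma>. prod \<alpha> \<tau>') else 0)"
proof -
  have sub: "sdiff_faces X A (csupp \<alpha>) \<subseteq> sdiff_faces X A \<sigma>"
    by (rule sdiff_faces_mono[OF closed_simplexD(2)[OF \<alpha>]])
  have zero: "prod \<alpha> \<tau>' = 0" if "\<tau>' \<in> sdiff_faces X A \<sigma> - sdiff_faces X A (csupp \<alpha>)" for \<tau>'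
    using that sdiff_vertex_simplex(1)[OF X] by (auto simp: sdiff_faces_def csupp_def)
  have "(\<Sum>\<tau>'\<in>sdiff_faces X A (csupp \<alpha>). prod \<alpha> \<tau>') = (\<Sum>\<tau>'\<in>sdiff_faces X A \<sigma>. prod \<alpha> \<tau>')"
    using finite_sdiff_faces[OF abs_simplicial_complex_simplex(1)[OF X \<sigma>]] sub zero
    by (intro sum.mono_neutral_left) auto
  then show ?thesis
    using sub zero[of \<tau>] by (auto simp: sdiff_coords_def)
qed

lemma sdiff_coords_denominator_pos:
  assumes X: "abs_simplicial_complex X" and \<sigma>: "\<sigma> \<in> X"
    and \<alpha>: "\<alpha> \<in> closed_simplex \<sigma>" "\<alpha> \<notin> realization_points A"
  shows "0 < (\<Sum>\<tau>\<in>sdiff_faces X A \<sigma>. prod \<alpha> \<tau>)"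
proof -
  have fin: "finite \<sigma>" using abs_simplicial_complex_simplex[OF X \<sigma>] by blast
  have "csupp \<alpha> \<in> X"
    using \<alpha>(1) closed_simplex_subset_realization_points[OF X \<sigma>] realization_pointsD(2) by blast
  moreover have "csupp \<alpha> \<notin> A"
    using \<alpha> realization_pointsI[OF fin] by blast
  ultimately obtain \<tau> where \<tau>: "\<tau> \<in> sdiff_vertices X A" "\<tau> \<subseteq> csupp \<alpha>"
    using sdiff_vertex_below[OF X] by blast
  have "0 < prod \<alpha> \<tau>"
    using \<tau>(2) closed_simplexD(1)[OF \<alpha>(1)] by (intro prod_pos) (force simp: csupp_def order_le_less)
  moreover have "\<tau> \<in> sdiff_faces X A \<sigma>"
    using \<tau> closed_simplexD(2)[OF \<alpha>(1)] by (auto simp: sdiff_faces_def)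
  ultimately show ?thesis
    by (intro sum_pos2[OF finite_sdiff_faces[OF fin]]) (auto simp: prod_nonneg closed_simplexD(1)[OF \<alpha>(1)])
qed

lemma sdiff_coords_in_closed_simplex:
  assumes X: "abs_simplicial_complex X" and \<sigma>: "\<sigma> \<in> X"
    and \<alpha>: "\<alpha> \<in> closed_simplex \<sigma>" "\<alpha> \<notin> realization_points A"
  shows "sdiff_coords X A \<alpha> \<in> closed_simplex (sdiff_faces X A \<sigma>)"
proof -
  let ?N = "\<Sum>\<tau>\<in>sdiff_faces X A \<sigma>. prod \<alpha> \<tau>"
  have N: "0 < ?N" by (rule sdiff_coords_denominator_pos[OF X \<sigma> \<alpha>])
  have "sum (sdiff_coords X A \<alpha>) (sdiff_faces X A \<sigma>) = (\<Sum>\<tau>\<in>sdiff_faces X A \<sigma>. prod \<alpha> \<tau> / ?N)"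
    by (simp add: sdiff_coords_eq[OF X \<sigma> \<alpha>(1)])
  also have "\<dots> = 1"
    using N by (simp add: sum_divide_distrib[symmetric])
  finally show ?thesis
    using N closed_simplexD(1)[OF \<alpha>(1)]
    by (auto simp: closed_simplex_def csupp_def sdiff_coords_eq[OF X \<sigma> \<alpha>(1)] prod_nonneg)
qed

lemma continuous_map_sdiff_coords:
  assumes X: "abs_simplicial_complex X" and \<sigma>: "\<sigma> \<in> X"
  shows "continuous_map (subtopology coord_topology (closed_simplex \<sigma> - realization_points A)) coord_topology
           (sdiff_coords X A)"
  unfolding continuous_map_componentwise_UNIV
proof
  fix \<tau>
  let ?W = "subtopology coord_topology (closed_simplex \<sigma> - realization_points A)"
  let ?N = "\<lambda>\<alpha>. \<Sum>\<tau>'\<in>sdiff_faces X A \<sigma>. prod \<alpha> \<tau>'"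
  have weight: "continuous_map ?W euclideanreal (\<lambda>\<alpha>. prod \<alpha> \<tau>')" if "\<tau>' \<in> sdiff_faces X A \<sigma>" for \<tau>'
    using that sdiff_vertex_simplex(1)[OF X]
    by (intro continuous_map_prod continuous_map_coordinate) (auto simp: sdiff_faces_def)
  have "continuous_map ?W euclideanreal
      (\<lambda>\<alpha>. if \<tau> \<in> sdiff_faces X A \<sigma> then prod \<alpha> \<tau> / ?N \<alpha> else 0)"
  proof (cases "\<tau> \<in> sdiff_faces X A \<sigma>")
    case True
    have "continuous_map ?W euclideanreal (\<lambda>\<alpha>. prod \<alpha> \<tau> / ?N \<alpha>)"
      using finite_sdiff_faces[OF abs_simplicial_complex_simplex(1)[OF X \<sigma>]]
        sdiff_coords_denominator_pos[OF X \<sigma>]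
      by (intro continuous_map_real_divide weight[OF True] continuous_map_sum weight) force+
    with True show ?thesis by simp
  qed simp
  then show "continuous_map ?W euclideanreal (\<lambda>\<alpha>. sdiff_coords X A \<alpha> \<tau>)"
    by (rule continuous_map_eq) (simp add: sdiff_coords_eq[OF X \<sigma>])
qed

section \<open>The map from \<open>|X \<ominus> A|\<close> to \<open>|X| - |A|\<close>\<close>

definition barycentre :: "'v set \<Rightarrow> 'v \<Rightarrow> real" where
  "barycentre \<tau> v = (if v \<in> \<tau> then inverse (real (card \<tau>)) else 0)"

definition barycentre_sum :: "('v set \<Rightarrow> real) \<Rightarrow> 'v \<Rightarrow> real" where
  "barycentre_sum \<beta> = (\<lambda>v. \<Sum>\<tau>\<in>csupp \<beta>. \<beta> \<tau> * barycentre \<tau> v)"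

lemma barycentre_sum_eq:
  assumes "finite S" "\<beta> \<in> closed_simplex S"
  shows "barycentre_sum \<beta> v = (\<Sum>\<tau>\<in>S. \<beta> \<tau> * barycentre \<tau> v)"
  unfolding barycentre_sum_def
  by (rule sum.mono_neutral_left[OF assms(1) closed_simplexD(2)[OF assms(2)]]) (auto simp: csupp_def)

lemma sum_barycentre:
  assumes "finite \<tau>" "\<tau> \<noteq> {}" "finite U" "\<tau> \<subseteq> U"
  shows "(\<Sum>v\<in>U. barycentre \<tau> v) = 1"
proof -
  have "(\<Sum>v\<in>U. barycentre \<tau> v) = (\<Sum>v\<in>U \<inter> \<tau>. inverse (real (card \<tau>)))"
    unfolding barycentre_def by (rule sum.inter_restrict[OF assms(3), symmetric])
  also have "U \<inter> \<tau> = \<tau>" using assms(4) by blast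
  finally show ?thesis using assms(1,2) by simp
qed

lemma continuous_map_barycentre_sum:
  assumes "finite S"
  shows "continuous_map (subtopology coord_topology (closed_simplex S)) coord_topology barycentre_sum"
  unfolding continuous_map_componentwise_UNIV
proof
  fix v
  have "continuous_map (subtopology coord_topology (closed_simplex S)) euclideanreal
      (\<lambda>\<beta>. \<Sum>\<tau>\<in>S. \<beta> \<tau> * barycentre \<tau> v)"
    by (intro continuous_map_sum[OF assms] continuous_map_real_mult_right continuous_map_coordinate)
  then show "continuous_map (subtopology coord_topology (closed_simplex S)) euclideanreal
      (\<lambda>\<beta>. barycentre_sum \<beta> v)"
    by (rule continuous_map_eq) (simp add: barycentre_sum_eq[OF assms])
qed

lemma barycentre_sum_in_closed_simplex:
  assumes S: "finite S" "\<And>\<tau>. \<tau> \<in> S \<Longrightarrow> finite \<tau> \<and> \<tau> \<noteq> {}" and \<beta>: "\<beta> \<in> closed_simplex S"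
  shows "barycentre_sum \<beta> \<in> closed_simplex (\<Union>S)"
proof -
  have fin: "finite (\<Union>S)" using S by blast
  have nonneg: "0 \<le> barycentre_sum \<beta> v" for v
    using closed_simplexD(1)[OF \<beta>]
    by (simp add: barycentre_sum_eq[OF S(1) \<beta>] barycentre_def sum_nonneg)
  have supp: "csupp (barycentre_sum \<beta>) \<subseteq> \<Union>S"
    by (auto simp: csupp_def barycentre_sum_eq[OF S(1) \<beta>] barycentre_def intro: ccontr sum.neutral)
  have "sum (barycentre_sum \<beta>) (\<Union>S) = (\<Sum>\<tau>\<in>S. \<beta> \<tau> * (\<Sum>v\<in>\<Union>S. barycentre \<tau> v))"
    by (simp add: barycentre_sum_eq[OF S(1) \<beta>] sum.swap[of _ "\<Union>S"] sum_distrib_left)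
  also have "\<dots> = sum \<beta> S"
  proof (rule sum.cong)
    fix \<tau> assume "\<tau> \<in> S"
    then have "(\<Sum>v\<in>\<Union>S. barycentre \<tau> v) = 1"
      using S(2) by (intro sum_barycentre[OF _ _ fin]) auto
    then show "\<beta> \<tau> * (\<Sum>v\<in>\<Union>S. barycentre \<tau> v) = \<beta> \<tau>" by simp
  qed simp
  finally have "sum (barycentre_sum \<beta>) (\<Union>S) = 1"
    using closed_simplexD(3)[OF \<beta>] by simp
  with supp nonneg show ?thesis by (simp add: closed_simplex_def)
qed

lemma csupp_barycentre_sum:
  assumes S: "finite S" "\<tau> \<in> S" "finite \<tau>" and \<beta>: "\<beta> \<in> closed_simplex S" "\<beta> \<tau> \<noteq> 0"
  shows "\<tau> \<subseteq> csupp (barycentre_sum \<beta>)"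
proof
  fix v assume v: "v \<in> \<tau>"
  have "\<beta> \<tau> * barycentre \<tau> v \<le> barycentre_sum \<beta> v"
    unfolding barycentre_sum_eq[OF S(1) \<beta>(1)]
    by (rule member_le_sum[OF S(2)]) (simp_all add: closed_simplexD(1)[OF \<beta>(1)] barycentre_def S(1))
  moreover have "0 < card \<tau>" using v S(3) card_gt_0_iff by blast
  then have "0 < \<beta> \<tau> * barycentre \<tau> v"
    using v \<beta>(2) closed_simplexD(1)[OF \<beta>(1), of \<tau>] by (simp add: barycentre_def)
  ultimately show "v \<in> csupp (barycentre_sum \<beta>)" by (simp add: csupp_def)
qed

lemma barycentre_sum_notin_realization_points:
  assumes X: "abs_simplicial_complex X" and A: "abs_simplicial_complex A"
    and S: "S \<in> simplicial_difference X A" and \<beta>: "\<beta> \<in> closed_simplex S"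
  shows "barycentre_sum \<beta> \<notin> realization_points A"
proof
  note S' = simplicial_differenceD[OF S]
  assume "barycentre_sum \<beta> \<in> realization_points A"
  then have supp: "csupp (barycentre_sum \<beta>) \<in> A" by (rule realization_pointsD(2))
  have "\<exists>\<tau>\<in>S. \<beta> \<tau> \<noteq> 0"
    using closed_simplexD(3)[OF \<beta>] by (metis sum.neutral zero_neq_one)
  then obtain \<tau> where \<tau>: "\<tau> \<in> S" "\<beta> \<tau> \<noteq> 0" by blast
  then have "\<tau> \<in> sdiff_vertices X A" using S' by blast
  then show False
    using abs_simplicial_complex_face[OF A supp csupp_barycentre_sum[OF S'(1) \<tau>(1) _ \<beta> \<tau>(2)]]
      sdiff_vertex_simplex[OF X] sdiff_verticesD(2) by blast
qed

definition convex_comb :: "real \<Rightarrow> ('a \<Rightarrow> real) \<Rightarrow> ('a \<Rightarrow> real) \<Rightarrow> 'a \<Rightarrow> real" where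
  "convex_comb t a b = (\<lambda>v. (1 - t) * a v + t * b v)"

lemma convex_comb_0 [simp]: "convex_comb 0 a b = a"
  and convex_comb_1 [simp]: "convex_comb 1 a b = b"
  by (simp_all add: convex_comb_def fun_eq_iff)

lemma convex_comb_in_closed_simplex:
  assumes a: "a \<in> closed_simplex \<sigma>" and b: "b \<in> closed_simplex \<sigma>" and t: "t \<in> {0..1}"
  shows "convex_comb t a b \<in> closed_simplex \<sigma>"
proof -
  have nonneg: "0 \<le> convex_comb t a b v" for v
    using closed_simplexD(1)[OF a, of v] closed_simplexD(1)[OF b, of v] t by (simp add: convex_comb_def)
  have "csupp (convex_comb t a b) \<subseteq> csupp a \<union> csupp b"
    by (auto simp: csupp_def convex_comb_def)
  then have supp: "csupp (convex_comb t a b) \<subseteq> \<sigma>"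
    using closed_simplexD(2)[OF a] closed_simplexD(2)[OF b] by blast
  have "sum (convex_comb t a b) \<sigma> = (1 - t) * sum a \<sigma> + t * sum b \<sigma>"
    by (simp add: convex_comb_def sum.distrib sum_distrib_left)
  with nonneg supp show ?thesis
    using closed_simplexD(3)[OF a] closed_simplexD(3)[OF b] by (simp add: closed_simplex_def)
qed

text \<open>The support of a convex combination contains the support of an endpoint, and \<open>B\<close>
  is closed under faces.\<close>

lemma convex_comb_notin_realization_points:
  assumes B: "abs_simplicial_complex B" and fin: "finite \<sigma>"
    and a: "a \<in> closed_simplex \<sigma>" "a \<notin> realization_points B"
    and b: "b \<in> closed_simplex \<sigma>" "b \<notin> realization_points B"
    and t: "t \<in> {0..1}"
  shows "convex_comb t a b \<notin> realization_points B"
proof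
  assume "convex_comb t a b \<in> realization_points B"
  then have supp: "csupp (convex_comb t a b) \<in> B" by (rule realization_pointsD(2))
  have in_B: "c \<in> realization_points B"
    if c: "c \<in> closed_simplex \<sigma>" "csupp c \<subseteq> csupp (convex_comb t a b)" for c
  proof -
    have "csupp c \<noteq> {}" using sum_csupp_closed_simplex[OF fin c(1)] by auto
    then show ?thesis
      using realization_pointsI[OF fin c(1)] abs_simplicial_complex_face[OF B supp c(2)] by blast
  qed
  show False
  proof (cases "t = 1")
    case True
    then show False using supp b realization_pointsI[OF fin b(1)] by simp
  next
    case False
    then have "0 < 1 - t" using t by simp
    then have "csupp a \<subseteq> csupp (convex_comb t a b)"
      using closed_simplexD(1)[OF a(1)] closed_simplexD(1)[OF b(1)] t
      by (auto simp: csupp_def convex_comb_def add_nonneg_eq_0_iff)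
    then show False using in_B a by blast
  qed
qed

lemma continuous_map_convex_comb:
  assumes k: "continuous_map (subtopology coord_topology S) coord_topology k"
  shows "continuous_map (prod_topology (top_of_set {0..1::real}) (subtopology coord_topology S)) coord_topology
            (\<lambda>p. convex_comb (fst p) (k (snd p)) (snd p))"
  unfolding continuous_map_componentwise_UNIV convex_comb_def
proof
  fix v
  let ?W = "prod_topology (top_of_set {0..1::real}) (subtopology coord_topology S)"
  have "continuous_map (subtopology coord_topology S) euclideanreal ((\<lambda>\<alpha>. \<alpha> v) \<circ> k)"
    by (rule continuous_map_compose[OF k]) (rule continuous_map_product_projection, simp)
  then have "continuous_map ?W euclideanreal (\<lambda>p. k (snd p) v)"
    using continuous_map_compose[OF continuous_map_snd] by (simp add: o_def)
  moreover have "continuous_map ?W euclideanreal (\<lambda>p. snd p v)"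
    using continuous_map_compose[OF continuous_map_snd continuous_map_coordinate] by (simp add: o_def)
  moreover have "continuous_map ?W euclideanreal fst"
    by (rule continuous_map_into_fulltopology[OF continuous_map_fst])
  ultimately show "continuous_map ?W euclideanreal (\<lambda>p. (1 - fst p) * k (snd p) v + fst p * snd p v)"
    by (intro continuous_intros) auto
qed

lemma continuous_map_sdiff_coords_realization:
  assumes X: "abs_simplicial_complex X" and A: "abs_simplicial_complex A"
  shows "continuous_map (realization_minus X A) (realization (simplicial_difference X A)) (sdiff_coords X A)"
proof (rule continuous_map_from_realization_minus[OF X A])
  fix \<sigma> assume \<sigma>: "\<sigma> \<in> X"
  show "continuous_map (subtopology coord_topology (closed_simplex \<sigma> - realization_points A))
      (realization (simplicial_difference X A)) (sdiff_coords X A)"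
  proof (cases "\<sigma> \<in> A")
    case True
    then show ?thesis by (simp add: closed_simplex_Diff_realization_points_empty[OF A])
  next
    case False
    show ?thesis
      by (rule continuous_map_into_realization[OF abs_simplicial_complex_simplicial_difference[OF X]
            sdiff_faces_in_simplicial_difference[OF X \<sigma> False] continuous_map_sdiff_coords[OF X \<sigma>]])
        (simp add: sdiff_coords_in_closed_simplex[OF X \<sigma>])
  qed
qed

lemma barycentre_sum_in_realization_minus:
  assumes X: "abs_simplicial_complex X" and A: "abs_simplicial_complex A"
    and S: "S \<in> simplicial_difference X A" and \<beta>: "\<beta> \<in> closed_simplex S"
  shows "barycentre_sum \<beta> \<in> closed_simplex (\<Union>S) - realization_points A"
  using barycentre_sum_in_closed_simplex[OF simplicial_differenceD(1)[OF S] _ \<beta>]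
    barycentre_sum_notin_realization_points[OF X A S \<beta>]
    simplicial_differenceD(3)[OF S] sdiff_vertex_simplex[OF X]
  by blast

lemma continuous_map_barycentre_sum_realization:
  assumes X: "abs_simplicial_complex X" and A: "abs_simplicial_complex A"
  shows "continuous_map (realization (simplicial_difference X A)) (realization_minus X A) barycentre_sum"
proof (rule continuous_map_from_realization[OF abs_simplicial_complex_simplicial_difference[OF X]])
  fix S assume S: "S \<in> simplicial_difference X A"
  show "continuous_map (subtopology coord_topology (closed_simplex S)) (realization_minus X A) barycentre_sum"
    by (rule continuous_map_into_realization_minus[OF X simplicial_differenceD(4)[OF S]
          continuous_map_barycentre_sum[OF simplicial_differenceD(1)[OF S]]])
      (use barycentre_sum_in_realization_minus[OF X A S] in simp)
qed

lemma barycentre_sum_sdiff_coords_in_realization_minus: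
  assumes X: "abs_simplicial_complex X" and A: "abs_simplicial_complex A" and \<sigma>: "\<sigma> \<in> X" "\<sigma> \<notin> A"
    and \<alpha>: "\<alpha> \<in> closed_simplex \<sigma>" "\<alpha> \<notin> realization_points A"
  shows "barycentre_sum (sdiff_coords X A \<alpha>) \<in> closed_simplex \<sigma> - realization_points A"
  using barycentre_sum_in_realization_minus[OF X A
      sdiff_faces_in_simplicial_difference[OF X \<sigma>] sdiff_coords_in_closed_simplex[OF X \<sigma>(1) \<alpha>]]
    closed_simplex_mono[OF abs_simplicial_complex_simplex(1)[OF X \<sigma>(1)] Union_sdiff_faces_subset]
  by blast

lemma continuous_map_homotopy_realization_minus:
  assumes X: "abs_simplicial_complex X" and A: "abs_simplicial_complex A"
  shows "continuous_map (prod_topology (top_of_set {0..1::real}) (realization_minus X A)) (realization_minus X A)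
           (\<lambda>p. convex_comb (fst p) (barycentre_sum (sdiff_coords X A (snd p))) (snd p))"
proof (rule continuous_map_from_interval_times_realization_minus[OF X A])
  fix \<sigma> assume \<sigma>: "\<sigma> \<in> X"
  let ?W = "subtopology coord_topology (closed_simplex \<sigma> - realization_points A)"
  show "continuous_map (prod_topology (top_of_set {0..1}) ?W) (realization_minus X A)
      (\<lambda>p. convex_comb (fst p) (barycentre_sum (sdiff_coords X A (snd p))) (snd p))"
  proof (cases "\<sigma> \<in> A")
    case True
    then show ?thesis
      by (simp add: closed_simplex_Diff_realization_points_empty[OF A])
  next
    case False
    have faces: "sdiff_faces X A \<sigma> \<in> simplicial_difference X A"
      by (rule sdiff_faces_in_simplicial_difference[OF X \<sigma> False])
    have "continuous_map ?W (subtopology coord_topology (closed_simplex (sdiff_faces X A \<sigma>))) (sdiff_coords X A)"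
      using continuous_map_sdiff_coords[OF X \<sigma>] sdiff_coords_in_closed_simplex[OF X \<sigma>]
      by (auto simp: continuous_map_in_subtopology)
    then have "continuous_map ?W coord_topology (barycentre_sum \<circ> sdiff_coords X A)"
      by (rule continuous_map_compose[OF _ continuous_map_barycentre_sum[OF simplicial_differenceD(1)[OF faces]]])
    then have comb: "continuous_map (prod_topology (top_of_set {0..1}) ?W) coord_topology
        (\<lambda>p. convex_comb (fst p) (barycentre_sum (sdiff_coords X A (snd p))) (snd p))"
      using continuous_map_convex_comb by (simp add: o_def)
    show ?thesis
    proof (rule continuous_map_into_realization_minus[OF X \<sigma> comb])
      fix p assume "p \<in> topspace (prod_topology (top_of_set {0..1::real}) ?W)"
      then have t: "fst p \<in> {0..1}" and \<alpha>: "snd p \<in> closed_simplex \<sigma>" "snd p \<notin> realization_points A"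
        by auto
      have "barycentre_sum (sdiff_coords X A (snd p)) \<in> closed_simplex \<sigma> - realization_points A"
        by (rule barycentre_sum_sdiff_coords_in_realization_minus[OF X A \<sigma> False \<alpha>])
      then show "convex_comb (fst p) (barycentre_sum (sdiff_coords X A (snd p))) (snd p)
          \<in> closed_simplex \<sigma> - realization_points A"
        using convex_comb_in_closed_simplex[OF _ \<alpha>(1) t]
          convex_comb_notin_realization_points[OF A abs_simplicial_complex_simplex(1)[OF X \<sigma>] _ _ \<alpha> t]
        by blast
    qed
  qed
qed

lemma continuous_map_homotopy_simplicial_difference:
  assumes X: "abs_simplicial_complex X" and A: "abs_simplicial_complex A"
  shows "continuous_map (prod_topology (top_of_set {0..1::real}) (realization (simplicial_difference X A)))
           (realization (simplicial_difference X A))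
           (\<lambda>p. convex_comb (fst p) (sdiff_coords X A (barycentre_sum (snd p))) (snd p))"
proof (rule continuous_map_from_interval_times_realization[OF abs_simplicial_complex_simplicial_difference[OF X]])
  fix S assume S: "S \<in> simplicial_difference X A"
  let ?W = "subtopology coord_topology (closed_simplex S)"
  have US: "\<Union>S \<in> X" "\<Union>S \<notin> A"
    using simplicial_differenceD(4)[OF S] Union_simplicial_difference_notin[OF X A S] by auto
  have faces: "sdiff_faces X A (\<Union>S) \<in> simplicial_difference X A"
    by (rule sdiff_faces_in_simplicial_difference[OF X US])
  have "continuous_map ?W (subtopology coord_topology (closed_simplex (\<Union>S) - realization_points A)) barycentre_sum"
    using continuous_map_barycentre_sum[OF simplicial_differenceD(1)[OF S]]
      barycentre_sum_in_realization_minus[OF X A S]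
    by (auto simp: continuous_map_in_subtopology)
  then have "continuous_map ?W coord_topology (sdiff_coords X A \<circ> barycentre_sum)"
    by (rule continuous_map_compose[OF _ continuous_map_sdiff_coords[OF X US(1)]])
  then have comb: "continuous_map (prod_topology (top_of_set {0..1}) ?W) coord_topology
      (\<lambda>p. convex_comb (fst p) (sdiff_coords X A (barycentre_sum (snd p))) (snd p))"
    using continuous_map_convex_comb by (simp add: o_def)
  show "continuous_map (prod_topology (top_of_set {0..1}) ?W) (realization (simplicial_difference X A))
      (\<lambda>p. convex_comb (fst p) (sdiff_coords X A (barycentre_sum (snd p))) (snd p))"
  proof (rule continuous_map_into_realization[OF abs_simplicial_complex_simplicial_difference[OF X] faces comb])
    fix p assume "p \<in> topspace (prod_topology (top_of_set {0..1::real}) ?W)"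
    then have t: "fst p \<in> {0..1}" and \<beta>: "snd p \<in> closed_simplex S" by auto
    have "sdiff_coords X A (barycentre_sum (snd p)) \<in> closed_simplex (sdiff_faces X A (\<Union>S))"
      using sdiff_coords_in_closed_simplex[OF X US(1)] barycentre_sum_in_realization_minus[OF X A S \<beta>]
      by blast
    moreover have "snd p \<in> closed_simplex (sdiff_faces X A (\<Union>S))"
      by (rule closed_simplex_mono[OF simplicial_differenceD(1)[OF faces] subset_sdiff_faces_Union[OF S] \<beta>])
    ultimately show "convex_comb (fst p) (sdiff_coords X A (barycentre_sum (snd p))) (snd p)
        \<in> closed_simplex (sdiff_faces X A (\<Union>S))"
      by (rule convex_comb_in_closed_simplex[OF _ _ t])
  qed
qed

section \<open>Equivariance\<close>

locale inverse_maps_on =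
  fixes E :: "'v set" and p q :: "'v \<Rightarrow> 'v"
  assumes p_closed: "\<And>x. x \<in> E \<Longrightarrow> p x \<in> E"
    and q_p: "\<And>x. x \<in> E \<Longrightarrow> q (p x) = x" and p_q: "\<And>x. x \<in> E \<Longrightarrow> p (q x) = x"
begin

lemma q_image_p_image: "\<tau> \<subseteq> E \<Longrightarrow> q ` p ` \<tau> = \<tau>"
  using q_p by (force simp: image_iff)

lemma p_image_q_image: "\<tau> \<subseteq> E \<Longrightarrow> p ` q ` \<tau> = \<tau>"
  using p_q by (force simp: image_iff)

lemma inj_on_p: "\<tau> \<subseteq> E \<Longrightarrow> inj_on p \<tau>"
  by (metis inj_on_def q_p subsetD)

lemma inj_on_q: "\<tau> \<subseteq> E \<Longrightarrow> inj_on q \<tau>"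
  by (metis inj_on_def p_q subsetD)

lemma subset_p_image_iff: "\<tau> \<subseteq> E \<Longrightarrow> C \<subseteq> E \<Longrightarrow> \<tau> \<subseteq> p ` C \<longleftrightarrow> q ` \<tau> \<subseteq> C"
  using q_p p_q by (auto simp: subset_iff image_iff) metis

lemma mem_p_image_iff: "\<rho> \<subseteq> E \<Longrightarrow> v \<in> p ` \<rho> \<longleftrightarrow> v \<in> E \<and> q v \<in> \<rho>"
  using q_p p_q p_closed by (auto simp: image_iff subset_iff) metis

lemma csupp_relabel:
  assumes "csupp \<alpha> \<subseteq> E"
  shows "csupp (\<lambda>w. if w \<in> E then \<alpha> (q w) else 0) = p ` csupp \<alpha>"
proof (intro equalityI subsetI)
  fix w assume "w \<in> csupp (\<lambda>w. if w \<in> E then \<alpha> (q w) else 0)"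
  then have "w \<in> E" "q w \<in> csupp \<alpha>" by (auto simp: csupp_def split: if_splits)
  then show "w \<in> p ` csupp \<alpha>" using p_q by (metis image_eqI)
next
  fix w assume "w \<in> p ` csupp \<alpha>"
  then show "w \<in> csupp (\<lambda>w. if w \<in> E then \<alpha> (q w) else 0)"
    using assms p_closed q_p by (auto simp: csupp_def)
qed

lemma prod_relabel:
  assumes "\<tau> \<subseteq> E"
  shows "prod (\<lambda>w. if w \<in> E then \<alpha> (q w) else 0) \<tau> = prod \<alpha> (q ` \<tau>)"
proof -
  have "prod (\<lambda>w. if w \<in> E then \<alpha> (q w) else 0) \<tau> = prod (\<alpha> \<circ> q) \<tau>"
    using assms by (intro prod.cong) auto
  then show ?thesis by (simp add: prod.reindex[OF inj_on_q[OF assms]])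
qed

end

lemma group_action_inverse_maps_on:
  assumes G: "group G" and act: "group_action G E \<phi>" and g: "g \<in> carrier G"
  shows "inverse_maps_on E (\<phi> g) (\<phi> (inv\<^bsub>G\<^esub> g))"
proof -
  have g': "inv\<^bsub>G\<^esub> g \<in> carrier G" by (rule group.inv_closed[OF G g])
  have one: "\<phi> \<one>\<^bsub>G\<^esub> x = x" if "x \<in> E" for x
    using fun_cong[OF group_action.id_eq_one[OF act], of x] that by simp
  show ?thesis
  proof
    fix x assume x: "x \<in> E"
    show "\<phi> g x \<in> E" by (rule group_action.element_image[OF act g x refl])
    show "\<phi> (inv\<^bsub>G\<^esub> g) (\<phi> g x) = x"
      using group_action.composition_rule[OF act x g' g] group.l_inv[OF G g] one[OF x] by simp
    show "\<phi> g (\<phi> (inv\<^bsub>G\<^esub> g) x) = x"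
      using group_action.composition_rule[OF act x g g'] group.r_inv[OF G g] one[OF x] by simp
  qed
qed

lemma simplicial_action_inverse_maps_on:
  assumes "group G" "simplicial_action G \<phi> X" "g \<in> carrier G"
  shows "inverse_maps_on (cvertices X) (\<phi> g) (\<phi> (inv\<^bsub>G\<^esub> g))"
  using assms(2) by (intro group_action_inverse_maps_on[OF assms(1) _ assms(3)]) (simp add: simplicial_action_def)

lemma sdiff_vertices_invariant:
  assumes G: "group G" and act: "simplicial_action G \<phi> X"
    and A_inv: "\<forall>g\<in>carrier G. \<forall>\<sigma>\<in>A. \<phi> g ` \<sigma> \<in> A"
    and g: "g \<in> carrier G" and \<tau>: "\<tau> \<in> sdiff_vertices X A"
  shows "\<phi> g ` \<tau> \<in> sdiff_vertices X A"
proof -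
  have X_inv: "\<forall>g\<in>carrier G. \<forall>\<sigma>\<in>X. \<phi> g ` \<sigma> \<in> X"
    using act by (simp add: simplicial_action_def)
  have g': "inv\<^bsub>G\<^esub> g \<in> carrier G" by (rule group.inv_closed[OF G g])
  interpret inverse_maps_on "cvertices X" "\<phi> g" "\<phi> (inv\<^bsub>G\<^esub> g)"
    by (rule simplicial_action_inverse_maps_on[OF G act g])
  have E: "\<sigma> \<subseteq> cvertices X" if "\<sigma> \<in> X" for \<sigma> using that by (auto simp: cvertices_def)
  have \<tau>': "\<tau> \<in> X" "\<tau> \<notin> A" using sdiff_verticesD[OF \<tau>] by auto
  have "\<phi> g ` \<tau> \<in> X - A"
    using X_inv A_inv g g' \<tau>' q_image_p_image[OF E[OF \<tau>'(1)]] by (metis DiffI)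
  moreover have "\<rho> = \<phi> g ` \<tau>" if \<rho>: "\<rho> \<in> X - A" "\<rho> \<subseteq> \<phi> g ` \<tau>" for \<rho>
  proof -
    have "\<phi> (inv\<^bsub>G\<^esub> g) ` \<rho> \<in> X - A"
      using X_inv A_inv g g' \<rho>(1) p_image_q_image[OF E] by (metis DiffE DiffI)
    moreover have "\<phi> (inv\<^bsub>G\<^esub> g) ` \<rho> \<subseteq> \<tau>"
      using image_mono[OF \<rho>(2), of "\<phi> (inv\<^bsub>G\<^esub> g)"] q_image_p_image[OF E[OF \<tau>'(1)]] by simp
    ultimately have "\<phi> (inv\<^bsub>G\<^esub> g) ` \<rho> = \<tau>" using \<tau> unfolding sdiff_vertices_def by blast
    then show ?thesis using p_image_q_image[OF E] \<rho>(1) by force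
  qed
  ultimately show ?thesis unfolding sdiff_vertices_def by blast
qed

lemma sdiff_coords_relabel:
  assumes X: "abs_simplicial_complex X" and pq: "inverse_maps_on (cvertices X) p q"
    and Vp: "\<And>\<tau>. \<tau> \<in> sdiff_vertices X A \<Longrightarrow> p ` \<tau> \<in> sdiff_vertices X A"
    and Vq: "\<And>\<tau>. \<tau> \<in> sdiff_vertices X A \<Longrightarrow> q ` \<tau> \<in> sdiff_vertices X A"
    and \<alpha>: "\<alpha> \<in> realization_points X"
  shows "sdiff_coords X A (\<lambda>w. if w \<in> cvertices X then \<alpha> (q w) else 0) =
         (\<lambda>\<tau>. if \<tau> \<in> sdiff_vertices X A then sdiff_coords X A \<alpha> (q ` \<tau>) else 0)"
proof -
  interpret inverse_maps_on "cvertices X" p q by (rule pq)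
  define \<alpha>' where "\<alpha>' = (\<lambda>w. if w \<in> cvertices X then \<alpha> (q w) else 0)"
  define C where "C = csupp \<alpha>"
  have CE: "C \<subseteq> cvertices X"
    using realization_pointsD(2)[OF \<alpha>] by (auto simp: C_def cvertices_def)
  have VE: "\<tau> \<subseteq> cvertices X" if "\<tau> \<in> sdiff_vertices X A" for \<tau>
    by (rule sdiff_vertex_simplex(3)[OF X that])
  have supp: "csupp \<alpha>' = p ` C"
    unfolding \<alpha>'_def C_def by (rule csupp_relabel[OF CE[unfolded C_def]])
  have faces_iff: "\<tau> \<in> sdiff_faces X A (p ` C) \<longleftrightarrow> q ` \<tau> \<in> sdiff_faces X A C"
    if "\<tau> \<in> sdiff_vertices X A" for \<tau>
    using that Vq[OF that] subset_p_image_iff[OF VE[OF that] CE] by (simp add: sdiff_faces_def)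
  have weight: "prod \<alpha>' \<tau> = prod \<alpha> (q ` \<tau>)" if "\<tau> \<subseteq> cvertices X" for \<tau>
    unfolding \<alpha>'_def by (rule prod_relabel[OF that])
  have denominator: "(\<Sum>\<tau>\<in>sdiff_faces X A (p ` C). prod \<alpha>' \<tau>) = (\<Sum>\<tau>\<in>sdiff_faces X A C. prod \<alpha> \<tau>)"
  proof (rule sum.reindex_bij_witness[where j = "\<lambda>\<tau>. q ` \<tau>" and i = "\<lambda>\<rho>. p ` \<rho>"])
    fix \<tau> assume "\<tau> \<in> sdiff_faces X A (p ` C)"
    moreover then have "\<tau> \<in> sdiff_vertices X A" by (simp add: sdiff_faces_def)
    ultimately show "p ` q ` \<tau> = \<tau>" "q ` \<tau> \<in> sdiff_faces X A C" "prod \<alpha> (q ` \<tau>) = prod \<alpha>' \<tau>"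
      using p_image_q_image[OF VE] faces_iff weight[OF VE] by auto
  next
    fix \<rho> assume "\<rho> \<in> sdiff_faces X A C"
    moreover then have "\<rho> \<in> sdiff_vertices X A" by (simp add: sdiff_faces_def)
    ultimately show "q ` p ` \<rho> = \<rho>" "p ` \<rho> \<in> sdiff_faces X A (p ` C)"
      using faces_iff[OF Vp] q_image_p_image[OF VE] by auto
  qed
  show ?thesis
    unfolding \<alpha>'_def[symmetric]
  proof
    fix \<tau>
    show "sdiff_coords X A \<alpha>' \<tau> = (if \<tau> \<in> sdiff_vertices X A then sdiff_coords X A \<alpha> (q ` \<tau>) else 0)"
    proof (cases "\<tau> \<in> sdiff_vertices X A")
      case True
      then show ?thesis
        using faces_iff[OF True] weight[OF VE[OF True]] denominator
        by (simp add: sdiff_coords_def supp C_def)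
    qed (simp add: sdiff_coords_def sdiff_faces_def)
  qed
qed

lemma barycentre_relabel:
  assumes "inverse_maps_on E p q" "\<rho> \<subseteq> E"
  shows "barycentre (p ` \<rho>) v = (if v \<in> E then barycentre \<rho> (q v) else 0)"
proof -
  interpret inverse_maps_on E p q by (rule assms(1))
  show ?thesis
    using mem_p_image_iff[OF assms(2), of v] card_image[OF inj_on_p[OF assms(2)]]
    by (auto simp: barycentre_def)
qed

lemma barycentre_sum_relabel:
  assumes X: "abs_simplicial_complex X" and pq: "inverse_maps_on (cvertices X) p q"
    and Vp: "\<And>\<tau>. \<tau> \<in> sdiff_vertices X A \<Longrightarrow> p ` \<tau> \<in> sdiff_vertices X A"
    and Vq: "\<And>\<tau>. \<tau> \<in> sdiff_vertices X A \<Longrightarrow> q ` \<tau> \<in> sdiff_vertices X A"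
    and \<beta>: "\<beta> \<in> realization_points (simplicial_difference X A)"
  shows "barycentre_sum (\<lambda>\<tau>. if \<tau> \<in> sdiff_vertices X A then \<beta> (q ` \<tau>) else 0) =
         (\<lambda>v. if v \<in> cvertices X then barycentre_sum \<beta> (q v) else 0)"
proof
  interpret inverse_maps_on "cvertices X" p q by (rule pq)
  fix v
  define \<beta>' where "\<beta>' = (\<lambda>\<tau>. if \<tau> \<in> sdiff_vertices X A then \<beta> (q ` \<tau>) else 0)"
  have D: "csupp \<beta> \<subseteq> sdiff_vertices X A"
    using simplicial_differenceD(3)[OF realization_pointsD(2)[OF \<beta>]] .
  have VE: "\<tau> \<subseteq> cvertices X" if "\<tau> \<in> sdiff_vertices X A" for \<tau>
    by (rule sdiff_vertex_simplex(3)[OF X that])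
  have "barycentre_sum \<beta>' v = (\<Sum>\<rho>\<in>csupp \<beta>. \<beta> \<rho> * barycentre (p ` \<rho>) v)"
    unfolding barycentre_sum_def
  proof (rule sum.reindex_bij_witness[where j = "\<lambda>\<tau>. q ` \<tau>" and i = "\<lambda>\<rho>. p ` \<rho>"])
    fix \<tau> assume "\<tau> \<in> csupp \<beta>'"
    then have "\<tau> \<in> sdiff_vertices X A" "\<beta> (q ` \<tau>) \<noteq> 0"
      by (auto simp: csupp_def \<beta>'_def split: if_splits)
    then show "p ` q ` \<tau> = \<tau>" "q ` \<tau> \<in> csupp \<beta>"
      "\<beta> (q ` \<tau>) * barycentre (p ` q ` \<tau>) v = \<beta>' \<tau> * barycentre \<tau> v"
      using p_image_q_image[OF VE] by (auto simp: csupp_def \<beta>'_def)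
  next
    fix \<rho> assume "\<rho> \<in> csupp \<beta>"
    then have \<rho>: "\<rho> \<in> sdiff_vertices X A" "\<beta> \<rho> \<noteq> 0" using D by (auto simp: csupp_def)
    then show "q ` p ` \<rho> = \<rho>" "p ` \<rho> \<in> csupp \<beta>'"
      using Vp[OF \<rho>(1)] q_image_p_image[OF VE[OF \<rho>(1)]] by (auto simp: csupp_def \<beta>'_def)
  qed
  also have "\<dots> = (if v \<in> cvertices X then barycentre_sum \<beta> (q v) else 0)"
    using D VE barycentre_relabel[OF pq]
    by (auto simp: barycentre_sum_def intro!: sum.neutral sum.cong)
  finally show "barycentre_sum \<beta>' v = (if v \<in> cvertices X then barycentre_sum \<beta> (q v) else 0)" .
qed

lemma sdiff_coords_equivariant:
  assumes G: "group G" and X: "abs_simplicial_complex X" and act: "simplicial_action G \<phi> X"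
    and A_inv: "\<forall>g\<in>carrier G. \<forall>\<sigma>\<in>A. \<phi> g ` \<sigma> \<in> A"
    and g: "g \<in> carrier G" and \<alpha>: "\<alpha> \<in> realization_points X"
  shows "sdiff_coords X A (realization_action G \<phi> X g \<alpha>) =
         realization_action G (sdiff_action \<phi>) (simplicial_difference X A) g (sdiff_coords X A \<alpha>)"
proof -
  from simplicial_action_inverse_maps_on[OF G act g] sdiff_vertices_invariant[OF G act A_inv] g group.inv_closed[OF G g] show ?thesis
    unfolding realization_action_def cvertices_simplicial_difference sdiff_action_def
    by (intro sdiff_coords_relabel[OF X _ _ _ \<alpha>]) auto
qed

lemma barycentre_sum_equivariant:
  assumes G: "group G" and X: "abs_simplicial_complex X" and act: "simplicial_action G \<phi> X"
    and A_inv: "\<forall>g\<in>carrier G. \<forall>\<sigma>\<in>A. \<phi> g ` \<sigma> \<in> A"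
    and g: "g \<in> carrier G" and \<beta>: "\<beta> \<in> realization_points (simplicial_difference X A)"
  shows "barycentre_sum (realization_action G (sdiff_action \<phi>) (simplicial_difference X A) g \<beta>) =
         realization_action G \<phi> X g (barycentre_sum \<beta>)"
proof -
  from simplicial_action_inverse_maps_on[OF G act g] sdiff_vertices_invariant[OF G act A_inv] g group.inv_closed[OF G g] show ?thesis
    unfolding realization_action_def cvertices_simplicial_difference sdiff_action_def
    by (intro barycentre_sum_relabel[OF X _ _ _ \<beta>]) auto
qed

lemma realization_action_convex_comb:
  "realization_action G \<phi> K g (convex_comb t a b) =
   convex_comb t (realization_action G \<phi> K g a) (realization_action G \<phi> K g b)"
  by (simp add: realization_action_def convex_comb_def fun_eq_iff)

lemma equivariant_map_comp:
  assumes f: "equivariant_map G S a T b f" and h: "equivariant_map G T b U c h"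
  shows "equivariant_map G S a U c (h \<circ> f)"
proof -
  have "f x \<in> topspace T" if "x \<in> topspace S" for x
    using f that by (auto simp: equivariant_map_def continuous_map_def)
  with assms show ?thesis
    by (auto simp: equivariant_map_def intro: continuous_map_compose)
qed

lemma homotopic_with_equivariant_convex_comb:
  fixes S :: "('v \<Rightarrow> real) topology"
  assumes "continuous_map (prod_topology (top_of_set {0..1}) S) S (\<lambda>p. convex_comb (fst p) (k (snd p)) (snd p))"
    and "equivariant_map G S (realization_action G \<phi> K) S (realization_action G \<phi> K) k"
  shows "homotopic_with (\<lambda>k. \<forall>g\<in>carrier G. \<forall>x\<in>topspace S.
           k (realization_action G \<phi> K g x) = realization_action G \<phi> K g (k x)) S S k id"
  unfolding homotopic_with_def
proof (intro exI conjI allI ballI)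
  show "continuous_map (prod_topology (top_of_set {0..1}) S) S (\<lambda>p. convex_comb (fst p) (k (snd p)) (snd p))"
    by (rule assms(1))
  fix t g x assume "g \<in> carrier G" "x \<in> topspace S"
  then show "convex_comb (fst (t, realization_action G \<phi> K g x)) (k (snd (t, realization_action G \<phi> K g x)))
      (snd (t, realization_action G \<phi> K g x)) =
      realization_action G \<phi> K g (convex_comb (fst (t, x)) (k (snd (t, x))) (snd (t, x)))"
    using assms(2) by (simp add: equivariant_map_def realization_action_convex_comb)
qed simp_all

theorem theorem4p8:
  fixes G :: "('g, 'b) monoid_scheme"
    and \<phi> :: "'g \<Rightarrow> 'v \<Rightarrow> 'v"
    and X A :: "'v set set"
  assumes "group G" and "finite (carrier G)"
    and "abs_simplicial_complex X"
    and "subcomplex A X"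
    and "simplicial_action G \<phi> X"
    and "\<forall>g\<in>carrier G. \<forall>\<sigma>\<in>A. \<phi> g ` \<sigma> \<in> A"
  shows "equivariant_homotopy_equivalent G
           (realization_minus X A) (realization_action G \<phi> X)
           (realization (simplicial_difference X A))
           (realization_action G (sdiff_action \<phi>) (simplicial_difference X A))"
proof -
  note G = assms(1) and X = assms(3) and act = assms(5) and A_inv = assms(6)
  have A: "abs_simplicial_complex A" using assms(4) by (simp add: subcomplex_def)
  let ?S = "realization_minus X A" and ?T = "realization (simplicial_difference X A)"
  let ?a = "realization_action G \<phi> X"
  let ?b = "realization_action G (sdiff_action \<phi>) (simplicial_difference X A)"
  have f: "equivariant_map G ?S ?a ?T ?b (sdiff_coords X A)"
    using continuous_map_sdiff_coords_realization[OF X A] sdiff_coords_equivariant[OF G X act A_inv]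
    by (simp add: equivariant_map_def topspace_realization_minus[OF X])
  have h: "equivariant_map G ?T ?b ?S ?a barycentre_sum"
    using continuous_map_barycentre_sum_realization[OF X A] barycentre_sum_equivariant[OF G X act A_inv]
    by (simp add: equivariant_map_def topspace_realization[OF abs_simplicial_complex_simplicial_difference[OF X]])
  have "continuous_map (prod_topology (top_of_set {0..1}) ?S) ?S
      (\<lambda>p. convex_comb (fst p) ((barycentre_sum \<circ> sdiff_coords X A) (snd p)) (snd p))"
    using continuous_map_homotopy_realization_minus[OF X A] by (simp add: o_def)
  note hf = homotopic_with_equivariant_convex_comb[OF this equivariant_map_comp[OF f h]]
  have "continuous_map (prod_topology (top_of_set {0..1}) ?T) ?T
      (\<lambda>p. convex_comb (fst p) ((sdiff_coords X A \<circ> barycentre_sum) (snd p)) (snd p))"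
    using continuous_map_homotopy_simplicial_difference[OF X A] by (simp add: o_def)
  note fh = homotopic_with_equivariant_convex_comb[OF this equivariant_map_comp[OF h f]]
  show ?thesis
    unfolding equivariant_homotopy_equivalent_def using f h hf fh by blast
qed

end
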